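(* Let $(\mathscr{C},\mathbb{E},\mathfrak{s})$ be an extriangulated category such that for every object $X$ the morphism $X\to 0$ is an $\mathbb{E}$-inflation and $0\to X$ is an $\mathbb{E}$-deflation, and let $\Sigma\colon\mathscr{C}\to\mathscr{C}$ be the functor constructed in the context. Then $\Sigma$ is an additive auto-equivalence of $\mathscr{C}$.
   Context: An extriangulated category $(\mathscr{C},\mathbb{E},\mathfrak{s})$ is in the sense of Nakaoka–Palu: $\mathscr{C}$ additive, $\mathbb{E}\colon\mathscr{C}^{\mathrm{op}}\times\mathscr{C}\to Ab$ biadditive, $\mathfrak{s}$ an additive realisation assigning to $\delta\in\mathbb{E}(C,A)$ an equivalence class of sequences $[A\to B\to C]$, satisfying (ET1)–(ET4)$^{\mathrm{op}}$. For $a\colon A\to A'$ and $c\colon C'\to C$ write $a_*\delta=\mathbb{E}(C,a)(\delta)$ and $c^*\delta=\mathbb{E}(c,A)(\delta)$. A morphism $x\colon A\to B$ is an $\mathbb{E}$-inflation if $\mathfrak{s}(\delta)=[A\xrightarrow{x}B\to C]$ for some $\delta\in\mathbb{E}(C,A)$; dually $y\colon B\to C$ is an $\mathbb{E}$-deflation if $\mathfrak{s}(\delta)=[A\to B\xrightarrow{y}C]$ for some $\delta$. Construction of $\Sigma$: for each object $X$, choose an object $\Sigma X$ and $\delta_X\in\mathbb{E}(\Sigma X,X)$ with $\mathfrak{s}(\delta_X)=[X\to 0\to\Sigma X]$. For a morphism $f\colon X\to Y$, $\Sigma f\colon\Sigma X\to\Sigma Y$ is the unique morphism with $f_*\delta_X=(\Sigma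 f)^*\delta_Y$; this defines a functor. *)

theory Defs
  imports Main
begin

text \<open>
  An extriangulated category (Nakaoka--Palu) with explicit carriers.
  Objects have type 'o, morphisms type 'm, elements of the groups E(C,A) type 'e.
  cmp g f is the composite g o f.  Ext C A is E(C,A).
  push a d is a_* d and pull c d is c^* d.
  real d B x y means that the sequence A -x-> B -y-> C belongs to the class s(d).
\<close>

record ('o,'m,'e) extri =
  Ob    :: "'o set"
  Hom   :: "'o \<Rightarrow> 'o \<Rightarrow> 'm set"
  cmp   :: "'m \<Rightarrow> 'm \<Rightarrow> 'm"
  ident :: "'o \<Rightarrow> 'm"
  madd  :: "'m \<Rightarrow> 'm \<Rightarrow> 'm"
  mzero :: "'o \<Rightarrow> 'o \<Rightarrow> 'm"
  mneg  :: "'m \<Rightarrow> 'm"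
  Ext   :: "'o \<Rightarrow> 'o \<Rightarrow> 'e set"
  eadd  :: "'e \<Rightarrow> 'e \<Rightarrow> 'e"
  ezero :: "'o \<Rightarrow> 'o \<Rightarrow> 'e"
  eneg  :: "'e \<Rightarrow> 'e"
  push  :: "'m \<Rightarrow> 'e \<Rightarrow> 'e"
  pull  :: "'m \<Rightarrow> 'e \<Rightarrow> 'e"
  real  :: "'e \<Rightarrow> 'o \<Rightarrow> 'm \<Rightarrow> 'm \<Rightarrow> bool"

definition is_category :: "('o,'m,'e) extri \<Rightarrow> bool" where
  "is_category K \<longleftrightarrow>
     (\<forall>X\<in>Ob K. ident K X \<in> Hom K X X) \<and>
     (\<forall>X\<in>Ob K. \<forall>Y\<in>Ob K. \<forall>Z\<in>Ob K. \<forall>f\<in>Hom K X Y. \<forall>g\<in>Hom K Y Z.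
         cmp K g f \<in> Hom K X Z) \<and>
     (\<forall>X\<in>Ob K. \<forall>Y\<in>Ob K. \<forall>f\<in>Hom K X Y.
         cmp K (ident K Y) f = f \<and> cmp K f (ident K X) = f) \<and>
     (\<forall>W\<in>Ob K. \<forall>X\<in>Ob K. \<forall>Y\<in>Ob K. \<forall>Z\<in>Ob K.
       \<forall>f\<in>Hom K W X. \<forall>g\<in>Hom K X Y. \<forall>h\<in>Hom K Y Z.
         cmp K h (cmp K g f) = cmp K (cmp K h g) f) \<and>
     (\<forall>X\<in>Ob K. \<forall>Y\<in>Ob K. \<forall>X'\<in>Ob K. \<forall>Y'\<in>Ob K.
         Hom K X Y \<inter> Hom K X' Y' \<noteq> {} \<longrightarrow> X = X' \<and> Y = Y')"

definition is_iso :: "('o,'m,'e) extri \<Rightarrow> 'o \<Rightarrow> 'o \<Rightarrow> 'm \<Rightarrow> bool" where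
  "is_iso K X Y f \<longleftrightarrow> f \<in> Hom K X Y \<and>
     (\<exists>g\<in>Hom K Y X. cmp K g f = ident K X \<and> cmp K f g = ident K Y)"

definition is_preadditive :: "('o,'m,'e) extri \<Rightarrow> bool" where
  "is_preadditive K \<longleftrightarrow>
     (\<forall>X\<in>Ob K. \<forall>Y\<in>Ob K.
        mzero K X Y \<in> Hom K X Y \<and>
        (\<forall>f\<in>Hom K X Y. \<forall>g\<in>Hom K X Y. madd K f g \<in> Hom K X Y) \<and>
        (\<forall>f\<in>Hom K X Y. mneg K f \<in> Hom K X Y) \<and>
        (\<forall>f\<in>Hom K X Y. \<forall>g\<in>Hom K X Y. \<forall>h\<in>Hom K X Y.
            madd K (madd K f g) h = madd K f (madd K g h)) \<and>
        (\<forall>f\<in>Hom K X Y. \<forall>g\<in>Hom K X Y. madd K f g = madd K g f) \<and>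
        (\<forall>f\<in>Hom K X Y. madd K f (mzero K X Y) = f) \<and>
        (\<forall>f\<in>Hom K X Y. madd K f (mneg K f) = mzero K X Y)) \<and>
     (\<forall>X\<in>Ob K. \<forall>Y\<in>Ob K. \<forall>Z\<in>Ob K.
        (\<forall>f\<in>Hom K X Y. \<forall>g\<in>Hom K Y Z. \<forall>g'\<in>Hom K Y Z.
            cmp K (madd K g g') f = madd K (cmp K g f) (cmp K g' f)) \<and>
        (\<forall>f\<in>Hom K X Y. \<forall>f'\<in>Hom K X Y. \<forall>g\<in>Hom K Y Z.
            cmp K g (madd K f f') = madd K (cmp K g f) (cmp K g f')))"

definition is_zero_obj :: "('o,'m,'e) extri \<Rightarrow> 'o \<Rightarrow> bool" where
  "is_zero_obj K Z \<longleftrightarrow> Z \<in> Ob K \<and>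
     (\<forall>X\<in>Ob K. (\<exists>!f. f \<in> Hom K Z X) \<and> (\<exists>!f. f \<in> Hom K X Z))"

definition is_biproduct ::
  "('o,'m,'e) extri \<Rightarrow> 'o \<Rightarrow> 'o \<Rightarrow> 'o \<Rightarrow> 'm \<Rightarrow> 'm \<Rightarrow> 'm \<Rightarrow> 'm \<Rightarrow> bool" where
  "is_biproduct K A B S i1 p1 i2 p2 \<longleftrightarrow> S \<in> Ob K \<and>
     i1 \<in> Hom K A S \<and> p1 \<in> Hom K S A \<and> i2 \<in> Hom K B S \<and> p2 \<in> Hom K S B \<and>
     cmp K p1 i1 = ident K A \<and> cmp K p2 i2 = ident K B \<and>
     cmp K p1 i2 = mzero K B A \<and> cmp K p2 i1 = mzero K A B \<and>
     madd K (cmp K i1 p1) (cmp K i2 p2) = ident K S"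

definition is_additive :: "('o,'m,'e) extri \<Rightarrow> bool" where
  "is_additive K \<longleftrightarrow> is_category K \<and> is_preadditive K \<and>
     (\<exists>Z. is_zero_obj K Z) \<and>
     (\<forall>A\<in>Ob K. \<forall>B\<in>Ob K. \<exists>S i1 p1 i2 p2. is_biproduct K A B S i1 p1 i2 p2)"

definition is_biadditive_E :: "('o,'m,'e) extri \<Rightarrow> bool" where
  "is_biadditive_E K \<longleftrightarrow>
     (\<forall>C\<in>Ob K. \<forall>A\<in>Ob K.
        ezero K C A \<in> Ext K C A \<and>
        (\<forall>d\<in>Ext K C A. \<forall>e\<in>Ext K C A. eadd K d e \<in> Ext K C A) \<and>
        (\<forall>d\<in>Ext K C A. eneg K d \<in> Ext K C A) \<and>
        (\<forall>d\<in>Ext K C A. \<forall>e\<in>Ext K C A. \<forall>h\<in>Ext K C A.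
            eadd K (eadd K d e) h = eadd K d (eadd K e h)) \<and>
        (\<forall>d\<in>Ext K C A. \<forall>e\<in>Ext K C A. eadd K d e = eadd K e d) \<and>
        (\<forall>d\<in>Ext K C A. eadd K d (ezero K C A) = d) \<and>
        (\<forall>d\<in>Ext K C A. eadd K d (eneg K d) = ezero K C A) \<and>
        (\<forall>d\<in>Ext K C A. push K (ident K A) d = d \<and> pull K (ident K C) d = d)) \<and>
     (\<forall>C\<in>Ob K. \<forall>A\<in>Ob K. \<forall>A'\<in>Ob K. \<forall>a\<in>Hom K A A'. \<forall>d\<in>Ext K C A.
        push K a d \<in> Ext K C A') \<and>
     (\<forall>C\<in>Ob K. \<forall>C'\<in>Ob K. \<forall>A\<in>Ob K. \<forall>c\<in>Hom K C' C. \<forall>d\<in>Ext K C A.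
        pull K c d \<in> Ext K C' A) \<and>
     (\<forall>C\<in>Ob K. \<forall>A\<in>Ob K. \<forall>A'\<in>Ob K. \<forall>A''\<in>Ob K.
        \<forall>a\<in>Hom K A A'. \<forall>a'\<in>Hom K A' A''. \<forall>d\<in>Ext K C A.
        push K (cmp K a' a) d = push K a' (push K a d)) \<and>
     (\<forall>C\<in>Ob K. \<forall>C'\<in>Ob K. \<forall>C''\<in>Ob K. \<forall>A\<in>Ob K.
        \<forall>c\<in>Hom K C' C. \<forall>c'\<in>Hom K C'' C'. \<forall>d\<in>Ext K C A.
        pull K (cmp K c c') d = pull K c' (pull K c d)) \<and>
     (\<forall>C\<in>Ob K. \<forall>C'\<in>Ob K. \<forall>A\<in>Ob K. \<forall>A'\<in>Ob K.
        \<forall>a\<in>Hom K A A'. \<forall>c\<in>Hom K C' C. \<forall>d\<in>Ext K C A.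
        push K a (pull K c d) = pull K c (push K a d)) \<and>
     (\<forall>C\<in>Ob K. \<forall>A\<in>Ob K. \<forall>A'\<in>Ob K. \<forall>a\<in>Hom K A A'.
        \<forall>d\<in>Ext K C A. \<forall>e\<in>Ext K C A.
        push K a (eadd K d e) = eadd K (push K a d) (push K a e)) \<and>
     (\<forall>C\<in>Ob K. \<forall>C'\<in>Ob K. \<forall>A\<in>Ob K. \<forall>c\<in>Hom K C' C.
        \<forall>d\<in>Ext K C A. \<forall>e\<in>Ext K C A.
        pull K c (eadd K d e) = eadd K (pull K c d) (pull K c e)) \<and>
     (\<forall>C\<in>Ob K. \<forall>A\<in>Ob K. \<forall>A'\<in>Ob K. \<forall>a\<in>Hom K A A'. \<forall>b\<in>Hom K A A'.
        \<forall>d\<in>Ext K C A. push K (madd K a b) d = eadd K (push K a d) (push K b d)) \<and>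
     (\<forall>C\<in>Ob K. \<forall>C'\<in>Ob K. \<forall>A\<in>Ob K. \<forall>c\<in>Hom K C' C. \<forall>c'\<in>Hom K C' C.
        \<forall>d\<in>Ext K C A. pull K (madd K c c') d = eadd K (pull K c d) (pull K c' d))"

definition seq_equiv ::
  "('o,'m,'e) extri \<Rightarrow> 'o \<Rightarrow> 'm \<Rightarrow> 'm \<Rightarrow> 'o \<Rightarrow> 'm \<Rightarrow> 'm \<Rightarrow> bool" where
  "seq_equiv K B x y B' x' y' \<longleftrightarrow>
     (\<exists>b. is_iso K B B' b \<and> cmp K b x = x' \<and> cmp K y' b = y)"

text \<open>s(d) is an equivalence class of sequences A -> B -> C, for every d in E(C,A).\<close>
definition is_class_assignment :: "('o,'m,'e) extri \<Rightarrow> bool" where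
  "is_class_assignment K \<longleftrightarrow>
     (\<forall>C\<in>Ob K. \<forall>A\<in>Ob K. \<forall>d\<in>Ext K C A.
        (\<forall>B x y. real K d B x y \<longrightarrow> B \<in> Ob K \<and> x \<in> Hom K A B \<and> y \<in> Hom K B C) \<and>
        (\<exists>B x y. real K d B x y) \<and>
        (\<forall>B x y B' x' y'. real K d B x y \<and> real K d B' x' y' \<longrightarrow>
            seq_equiv K B x y B' x' y') \<and>
        (\<forall>B x y B' x' y'. real K d B x y \<and> B' \<in> Ob K \<and> x' \<in> Hom K A B' \<and>
            y' \<in> Hom K B' C \<and> seq_equiv K B x y B' x' y' \<longrightarrow> real K d B' x' y'))"

definition is_realisation :: "('o,'m,'e) extri \<Rightarrow> bool" where
  "is_realisation K \<longleftrightarrow> is_class_assignment K \<and>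
     (\<forall>A\<in>Ob K. \<forall>C\<in>Ob K. \<forall>A'\<in>Ob K. \<forall>C'\<in>Ob K.
      \<forall>d\<in>Ext K C A. \<forall>d'\<in>Ext K C' A'. \<forall>a\<in>Hom K A A'. \<forall>c\<in>Hom K C C'.
      \<forall>B x y B' x' y'.
        push K a d = pull K c d' \<and> real K d B x y \<and> real K d' B' x' y' \<longrightarrow>
        (\<exists>b\<in>Hom K B B'. cmp K b x = cmp K x' a \<and> cmp K y' b = cmp K c y))"

definition is_additive_realisation :: "('o,'m,'e) extri \<Rightarrow> bool" where
  "is_additive_realisation K \<longleftrightarrow> is_realisation K \<and>
     (\<forall>A\<in>Ob K. \<forall>C\<in>Ob K. \<forall>S i1 p1 i2 p2.
        is_biproduct K A C S i1 p1 i2 p2 \<longrightarrow> real K (ezero K C A) S i1 p2) \<and>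
     (\<forall>A\<in>Ob K. \<forall>C\<in>Ob K. \<forall>A'\<in>Ob K. \<forall>C'\<in>Ob K.
      \<forall>d\<in>Ext K C A. \<forall>d'\<in>Ext K C' A'.
      \<forall>B x y B' x' y' SA iA pA iA' pA' SB iB pB iB' pB' SC iC pC iC' pC'.
        real K d B x y \<and> real K d' B' x' y' \<and>
        is_biproduct K A A' SA iA pA iA' pA' \<and>
        is_biproduct K B B' SB iB pB iB' pB' \<and>
        is_biproduct K C C' SC iC pC iC' pC' \<longrightarrow>
        real K (eadd K (push K iA (pull K pC d)) (push K iA' (pull K pC' d')))
          SB
          (madd K (cmp K iB (cmp K x pA)) (cmp K iB' (cmp K x' pA')))
          (madd K (cmp K iC (cmp K y pB)) (cmp K iC' (cmp K y' pB'))))"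

definition ET3 :: "('o,'m,'e) extri \<Rightarrow> bool" where
  "ET3 K \<longleftrightarrow>
     (\<forall>A\<in>Ob K. \<forall>C\<in>Ob K. \<forall>A'\<in>Ob K. \<forall>C'\<in>Ob K.
      \<forall>d\<in>Ext K C A. \<forall>d'\<in>Ext K C' A'. \<forall>B x y B' x' y'. \<forall>a\<in>Hom K A A'. \<forall>b\<in>Hom K B B'.
        real K d B x y \<and> real K d' B' x' y' \<and> cmp K b x = cmp K x' a \<longrightarrow>
        (\<exists>c\<in>Hom K C C'. cmp K c y = cmp K y' b \<and> push K a d = pull K c d'))"

definition ET3op :: "('o,'m,'e) extri \<Rightarrow> bool" where
  "ET3op K \<longleftrightarrow>
     (\<forall>A\<in>Ob K. \<forall>C\<in>Ob K. \<forall>A'\<in>Ob K. \<forall>C'\<in>Ob K.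
      \<forall>d\<in>Ext K C A. \<forall>d'\<in>Ext K C' A'. \<forall>B x y B' x' y'. \<forall>b\<in>Hom K B B'. \<forall>c\<in>Hom K C C'.
        real K d B x y \<and> real K d' B' x' y' \<and> cmp K c y = cmp K y' b \<longrightarrow>
        (\<exists>a\<in>Hom K A A'. cmp K b x = cmp K x' a \<and> push K a d = pull K c d'))"

definition ET4 :: "('o,'m,'e) extri \<Rightarrow> bool" where
  "ET4 K \<longleftrightarrow>
     (\<forall>A\<in>Ob K. \<forall>B\<in>Ob K. \<forall>C\<in>Ob K. \<forall>D\<in>Ob K. \<forall>F\<in>Ob K.
      \<forall>d\<in>Ext K D A. \<forall>d'\<in>Ext K F B. \<forall>f f' g g'.
        real K d B f f' \<and> real K d' C g g' \<longrightarrow>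
        (\<exists>E\<in>Ob K. \<exists>h'\<in>Hom K C E. \<exists>dd\<in>Hom K D E. \<exists>e\<in>Hom K E F. \<exists>d''\<in>Ext K E A.
           real K d'' C (cmp K g f) h' \<and>
           real K (push K f' d') E dd e \<and>
           pull K dd d'' = d \<and> push K f d'' = pull K e d' \<and>
           cmp K dd f' = cmp K h' g \<and> cmp K e h' = g'))"

definition ET4op :: "('o,'m,'e) extri \<Rightarrow> bool" where
  "ET4op K \<longleftrightarrow>
     (\<forall>A\<in>Ob K. \<forall>B\<in>Ob K. \<forall>C\<in>Ob K. \<forall>D\<in>Ob K. \<forall>F\<in>Ob K.
      \<forall>d\<in>Ext K A D. \<forall>d'\<in>Ext K B F. \<forall>f f' g g'.
        real K d B f' f \<and> real K d' C g' g \<longrightarrow>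
        (\<exists>E\<in>Ob K. \<exists>h'\<in>Hom K E C. \<exists>dd\<in>Hom K E D. \<exists>e\<in>Hom K F E. \<exists>d''\<in>Ext K A E.
           real K d'' C h' (cmp K f g) \<and>
           real K (pull K f' d') E e dd \<and>
           push K dd d'' = d \<and> pull K f d'' = push K e d' \<and>
           cmp K f' dd = cmp K g h' \<and> cmp K h' e = g'))"

definition extriangulated :: "('o,'m,'e) extri \<Rightarrow> bool" where
  "extriangulated K \<longleftrightarrow> is_additive K \<and> is_biadditive_E K \<and>
     is_additive_realisation K \<and> ET3 K \<and> ET3op K \<and> ET4 K \<and> ET4op K"

definition is_inflation :: "('o,'m,'e) extri \<Rightarrow> 'o \<Rightarrow> 'o \<Rightarrow> 'm \<Rightarrow> bool" where
  "is_inflation K A B x \<longleftrightarrow> x \<in> Hom K A B \<and>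
     (\<exists>C\<in>Ob K. \<exists>d\<in>Ext K C A. \<exists>y. real K d B x y)"

definition is_deflation :: "('o,'m,'e) extri \<Rightarrow> 'o \<Rightarrow> 'o \<Rightarrow> 'm \<Rightarrow> bool" where
  "is_deflation K B C y \<longleftrightarrow> y \<in> Hom K B C \<and>
     (\<exists>A\<in>Ob K. \<exists>d\<in>Ext K C A. \<exists>x. real K d B x y)"

definition is_endofunctor ::
  "('o,'m,'e) extri \<Rightarrow> ('o \<Rightarrow> 'o) \<Rightarrow> ('o \<Rightarrow> 'o \<Rightarrow> 'm \<Rightarrow> 'm) \<Rightarrow> bool" where
  "is_endofunctor K F0 F1 \<longleftrightarrow>
     (\<forall>X\<in>Ob K. F0 X \<in> Ob K) \<and>
     (\<forall>X\<in>Ob K. \<forall>Y\<in>Ob K. \<forall>f\<in>Hom K X Y. F1 X Y f \<in> Hom K (F0 X) (F0 Y)) \<and>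
     (\<forall>X\<in>Ob K. F1 X X (ident K X) = ident K (F0 X)) \<and>
     (\<forall>X\<in>Ob K. \<forall>Y\<in>Ob K. \<forall>Z\<in>Ob K. \<forall>f\<in>Hom K X Y. \<forall>g\<in>Hom K Y Z.
        F1 X Z (cmp K g f) = cmp K (F1 Y Z g) (F1 X Y f))"

definition is_additive_endofunctor ::
  "('o,'m,'e) extri \<Rightarrow> ('o \<Rightarrow> 'o) \<Rightarrow> ('o \<Rightarrow> 'o \<Rightarrow> 'm \<Rightarrow> 'm) \<Rightarrow> bool" where
  "is_additive_endofunctor K F0 F1 \<longleftrightarrow> is_endofunctor K F0 F1 \<and>
     (\<forall>X\<in>Ob K. \<forall>Y\<in>Ob K. \<forall>f\<in>Hom K X Y. \<forall>g\<in>Hom K X Y.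
        F1 X Y (madd K f g) = madd K (F1 X Y f) (F1 X Y g))"

definition is_autoequivalence ::
  "('o,'m,'e) extri \<Rightarrow> ('o \<Rightarrow> 'o) \<Rightarrow> ('o \<Rightarrow> 'o \<Rightarrow> 'm \<Rightarrow> 'm) \<Rightarrow> bool" where
  "is_autoequivalence K F0 F1 \<longleftrightarrow> is_endofunctor K F0 F1 \<and>
     (\<exists>G0 G1 eta eps. is_endofunctor K G0 G1 \<and>
        (\<forall>X\<in>Ob K. is_iso K X (G0 (F0 X)) (eta X)) \<and>
        (\<forall>X\<in>Ob K. \<forall>Y\<in>Ob K. \<forall>f\<in>Hom K X Y.
           cmp K (eta Y) f = cmp K (G1 (F0 X) (F0 Y) (F1 X Y f)) (eta X)) \<and>
        (\<forall>X\<in>Ob K. is_iso K (F0 (G0 X)) X (eps X)) \<and>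
        (\<forall>X\<in>Ob K. \<forall>Y\<in>Ob K. \<forall>f\<in>Hom K X Y.
           cmp K (eps Y) (F1 (G0 X) (G0 Y) (G1 X Y f)) = cmp K f (eps X)))"

definition SigmaMor ::
  "('o,'m,'e) extri \<Rightarrow> ('o \<Rightarrow> 'o) \<Rightarrow> ('o \<Rightarrow> 'e) \<Rightarrow> 'o \<Rightarrow> 'o \<Rightarrow> 'm \<Rightarrow> 'm" where
  "SigmaMor K Sig dl X Y f =
     (THE g. g \<in> Hom K (Sig X) (Sig Y) \<and> push K f (dl X) = pull K g (dl Y))"

end

(*
  Every dl X is realised by X -> 0 -> Sig X.  For such an extension, pushing out along
  morphisms out of X and pulling back along morphisms into Sig X are injective: a morphism
  killing it factors through the zero middle term, as one sees by comparing with the split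
  extension realised by a biproduct.  ET3 makes every f_* (dl X) a pull-back of dl Y, so
  Sigma is well defined and, by biadditivity of E, an additive functor; ET3op makes it full
  and injectivity of push-outs makes it faithful.  A deflation 0 -> Y is realised by some
  A -> 0 -> Y, which ET3 compares with dl A in both directions; injectivity of pull-backs
  makes the two comparison maps mutually inverse, so Y is isomorphic to Sig A.  A fully
  faithful, essentially surjective functor is an equivalence.
*)

theory Submission
  imports Defs
begin

section \<open>Equivalences of categories\<close>

locale category =
  fixes K :: "('o,'m,'e) extri"
  assumes is_category: "is_category K"
begin

lemma ident_hom [intro]: "X \<in> Ob K \<Longrightarrow> ident K X \<in> Hom K X X"
  using is_category unfolding is_category_def by meson

lemma cmp_hom [intro]:
  "\<lbrakk>f \<in> Hom K X Y; g \<in> Hom K Y Z; X \<in> Ob K; Y \<in> Ob K; Z \<in> Ob K\<rbrakk> \<Longrightarrow> cmp K g f \<in> Hom K X Z"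
  using is_category unfolding is_category_def by meson

lemma cmp_ident_left [simp]:
  "\<lbrakk>f \<in> Hom K X Y; X \<in> Ob K; Y \<in> Ob K\<rbrakk> \<Longrightarrow> cmp K (ident K Y) f = f"
  using is_category unfolding is_category_def by meson

lemma cmp_ident_right [simp]:
  "\<lbrakk>f \<in> Hom K X Y; X \<in> Ob K; Y \<in> Ob K\<rbrakk> \<Longrightarrow> cmp K f (ident K X) = f"
  using is_category unfolding is_category_def by meson

lemma cmp_assoc:
  "\<lbrakk>f \<in> Hom K W X; g \<in> Hom K X Y; h \<in> Hom K Y Z; W \<in> Ob K; X \<in> Ob K; Y \<in> Ob K; Z \<in> Ob K\<rbrakk>
   \<Longrightarrow> cmp K h (cmp K g f) = cmp K (cmp K h g) f"
  using is_category unfolding is_category_def by meson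

lemma cmp_inverse_cancel_left:
  assumes "k \<in> Hom K W X" "e' \<in> Hom K X Y" "e \<in> Hom K Y X" "cmp K e e' = ident K X"
    and "W \<in> Ob K" "X \<in> Ob K" "Y \<in> Ob K"
  shows "cmp K e (cmp K e' k) = k"
  using assms by (simp add: cmp_assoc)

lemma cmp_inverse_cancel_right:
  assumes "e' \<in> Hom K X Y" "e \<in> Hom K Y X" "k \<in> Hom K X Z" "cmp K e e' = ident K X"
    and "X \<in> Ob K" "Y \<in> Ob K" "Z \<in> Ob K"
  shows "cmp K (cmp K k e) e' = k"
  using assms by (simp flip: cmp_assoc)

lemma is_isoI:
  "\<lbrakk>f \<in> Hom K X Y; g \<in> Hom K Y X; cmp K g f = ident K X; cmp K f g = ident K Y\<rbrakk> \<Longrightarrow> is_iso K X Y f"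
  unfolding is_iso_def by blast

end

locale fully_faithful_endofunctor = category K for K :: "('o,'m,'e) extri" +
  fixes F0 :: "'o \<Rightarrow> 'o" and F1 :: "'o \<Rightarrow> 'o \<Rightarrow> 'm \<Rightarrow> 'm"
  assumes endofunctor: "is_endofunctor K F0 F1"
    and full: "\<And>X Y g. \<lbrakk>X \<in> Ob K; Y \<in> Ob K; g \<in> Hom K (F0 X) (F0 Y)\<rbrakk> \<Longrightarrow> \<exists>f\<in>Hom K X Y. F1 X Y f = g"
    and faithful: "\<And>X Y f f'. \<lbrakk>X \<in> Ob K; Y \<in> Ob K; f \<in> Hom K X Y; f' \<in> Hom K X Y; F1 X Y f = F1 X Y f'\<rbrakk>
      \<Longrightarrow> f = f'"
begin

lemma F0_Ob [simp, intro]: "X \<in> Ob K \<Longrightarrow> F0 X \<in> Ob K"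
  using endofunctor unfolding is_endofunctor_def by blast

lemma F1_hom [intro]: "\<lbrakk>X \<in> Ob K; Y \<in> Ob K; f \<in> Hom K X Y\<rbrakk> \<Longrightarrow> F1 X Y f \<in> Hom K (F0 X) (F0 Y)"
  using endofunctor unfolding is_endofunctor_def by blast

lemma F1_ident [simp]: "X \<in> Ob K \<Longrightarrow> F1 X X (ident K X) = ident K (F0 X)"
  using endofunctor unfolding is_endofunctor_def by blast

lemma F1_cmp [simp]:
  "\<lbrakk>f \<in> Hom K X Y; g \<in> Hom K Y Z; X \<in> Ob K; Y \<in> Ob K; Z \<in> Ob K\<rbrakk>
   \<Longrightarrow> F1 X Z (cmp K g f) = cmp K (F1 Y Z g) (F1 X Y f)"
  using endofunctor unfolding is_endofunctor_def by blast

definition preimage :: "'o \<Rightarrow> 'o \<Rightarrow> 'm \<Rightarrow> 'm" where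
  "preimage X Y g = (THE f. f \<in> Hom K X Y \<and> F1 X Y f = g)"

lemma preimage_unique:
  "\<lbrakk>X \<in> Ob K; Y \<in> Ob K; g \<in> Hom K (F0 X) (F0 Y)\<rbrakk> \<Longrightarrow> \<exists>!f. f \<in> Hom K X Y \<and> F1 X Y f = g"
  using full faithful by blast

lemma preimage_hom [intro]:
  "\<lbrakk>X \<in> Ob K; Y \<in> Ob K; g \<in> Hom K (F0 X) (F0 Y)\<rbrakk> \<Longrightarrow> preimage X Y g \<in> Hom K X Y"
  unfolding preimage_def by (drule (2) preimage_unique, drule theI') blast

lemma F1_preimage [simp]:
  "\<lbrakk>X \<in> Ob K; Y \<in> Ob K; g \<in> Hom K (F0 X) (F0 Y)\<rbrakk> \<Longrightarrow> F1 X Y (preimage X Y g) = g"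
  unfolding preimage_def by (drule (2) preimage_unique, drule theI') blast

end

text \<open>Given the object part G0 of a quasi-inverse and the counit isomorphisms eps, full
  faithfulness forces the action G1 on morphisms and the unit eta.\<close>

locale quasi_inverse_data = fully_faithful_endofunctor K F0 F1
  for K :: "('o,'m,'e) extri" and F0 F1 +
  fixes G0 :: "'o \<Rightarrow> 'o" and eps eps' :: "'o \<Rightarrow> 'm"
  assumes G0_Ob [simp, intro]: "\<And>Y. Y \<in> Ob K \<Longrightarrow> G0 Y \<in> Ob K"
    and eps_hom [intro]: "\<And>Y. Y \<in> Ob K \<Longrightarrow> eps Y \<in> Hom K (F0 (G0 Y)) Y"
    and eps'_hom [intro]: "\<And>Y. Y \<in> Ob K \<Longrightarrow> eps' Y \<in> Hom K Y (F0 (G0 Y))"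
    and eps'_eps [simp]: "\<And>Y. Y \<in> Ob K \<Longrightarrow> cmp K (eps' Y) (eps Y) = ident K (F0 (G0 Y))"
    and eps_eps' [simp]: "\<And>Y. Y \<in> Ob K \<Longrightarrow> cmp K (eps Y) (eps' Y) = ident K Y"
begin

definition G1 :: "'o \<Rightarrow> 'o \<Rightarrow> 'm \<Rightarrow> 'm" where
  "G1 Y Y' g = preimage (G0 Y) (G0 Y') (cmp K (eps' Y') (cmp K g (eps Y)))"

definition eta :: "'o \<Rightarrow> 'm" where
  "eta X = preimage X (G0 (F0 X)) (eps' (F0 X))"

definition eta' :: "'o \<Rightarrow> 'm" where
  "eta' X = preimage (G0 (F0 X)) X (eps (F0 X))"

lemma G1_hom [intro]:
  "\<lbrakk>Y \<in> Ob K; Y' \<in> Ob K; g \<in> Hom K Y Y'\<rbrakk> \<Longrightarrow> G1 Y Y' g \<in> Hom K (G0 Y) (G0 Y')"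
  unfolding G1_def by (blast intro: preimage_hom)

lemma eta_hom [intro]: "X \<in> Ob K \<Longrightarrow> eta X \<in> Hom K X (G0 (F0 X))"
  unfolding eta_def by (simp add: eps'_hom preimage_hom)

lemma eta'_hom [intro]: "X \<in> Ob K \<Longrightarrow> eta' X \<in> Hom K (G0 (F0 X)) X"
  unfolding eta'_def by (simp add: eps_hom preimage_hom)

lemma F1_eta [simp]: "X \<in> Ob K \<Longrightarrow> F1 X (G0 (F0 X)) (eta X) = eps' (F0 X)"
  unfolding eta_def by (simp add: eps'_hom)

lemma F1_eta' [simp]: "X \<in> Ob K \<Longrightarrow> F1 (G0 (F0 X)) X (eta' X) = eps (F0 X)"
  unfolding eta'_def by (simp add: eps_hom)

lemma F1_G1:
  assumes "Y \<in> Ob K" "Y' \<in> Ob K" "g \<in> Hom K Y Y'"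
  shows "F1 (G0 Y) (G0 Y') (G1 Y Y' g) = cmp K (eps' Y') (cmp K g (eps Y))"
  using assms unfolding G1_def by (blast intro: F1_preimage)

lemma eps_natural:
  assumes "Y \<in> Ob K" "Y' \<in> Ob K" "g \<in> Hom K Y Y'"
  shows "cmp K (eps Y') (F1 (G0 Y) (G0 Y') (G1 Y Y' g)) = cmp K g (eps Y)"
proof -
  have "cmp K g (eps Y) \<in> Hom K (F0 (G0 Y)) Y'"
    using assms by blast
  then show ?thesis
    using assms by (simp add: F1_G1 cmp_inverse_cancel_left[OF _ eps'_hom eps_hom])
qed

lemma G1_unique:
  assumes "Y \<in> Ob K" "Y' \<in> Ob K" "g \<in> Hom K Y Y'" "h \<in> Hom K (G0 Y) (G0 Y')"
    and "cmp K (eps Y') (F1 (G0 Y) (G0 Y') h) = cmp K g (eps Y)"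
  shows "G1 Y Y' g = h"
proof (rule faithful[of "G0 Y" "G0 Y'"])
  have "F1 (G0 Y) (G0 Y') h \<in> Hom K (F0 (G0 Y)) (F0 (G0 Y'))"
    using assms by blast
  then have "F1 (G0 Y) (G0 Y') h = cmp K (eps' Y') (cmp K (eps Y') (F1 (G0 Y) (G0 Y') h))"
    using assms(1,2) by (simp add: cmp_inverse_cancel_left[OF _ eps_hom eps'_hom])
  also have "\<dots> = F1 (G0 Y) (G0 Y') (G1 Y Y' g)"
    using assms by (simp add: F1_G1)
  finally show "F1 (G0 Y) (G0 Y') (G1 Y Y' g) = F1 (G0 Y) (G0 Y') h" ..
qed (use assms in blast)+

lemma G_endofunctor: "is_endofunctor K G0 G1"
  unfolding is_endofunctor_def
proof (intro conjI ballI)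
  fix X assume X: "X \<in> Ob K"
  then show "G1 X X (ident K X) = ident K (G0 X)"
    using eps_hom[OF X] by (intro G1_unique) (blast+, simp)
next
  fix X Y Z f g assume X: "X \<in> Ob K" and Y: "Y \<in> Ob K" and Z: "Z \<in> Ob K"
    and f: "f \<in> Hom K X Y" and g: "g \<in> Hom K Y Z"
  have Ff: "F1 (G0 X) (G0 Y) (G1 X Y f) \<in> Hom K (F0 (G0 X)) (F0 (G0 Y))"
    and Fg: "F1 (G0 Y) (G0 Z) (G1 Y Z g) \<in> Hom K (F0 (G0 Y)) (F0 (G0 Z))"
    using X Y Z f g by blast+
  have "cmp K (eps Z) (F1 (G0 X) (G0 Z) (cmp K (G1 Y Z g) (G1 X Y f)))
      = cmp K (cmp K (eps Z) (F1 (G0 Y) (G0 Z) (G1 Y Z g))) (F1 (G0 X) (G0 Y) (G1 X Y f))"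
    using X Y Z f g by (simp add: F1_cmp[OF G1_hom G1_hom] cmp_assoc[OF Ff Fg eps_hom])
  also have "\<dots> = cmp K (cmp K g (eps Y)) (F1 (G0 X) (G0 Y) (G1 X Y f))"
    using Y Z g by (simp add: eps_natural)
  also have "\<dots> = cmp K g (cmp K (eps Y) (F1 (G0 X) (G0 Y) (G1 X Y f)))"
    using X Y Z by (simp add: cmp_assoc[OF Ff eps_hom g])
  also have "\<dots> = cmp K g (cmp K f (eps X))"
    using X Y f by (simp add: eps_natural)
  also have "\<dots> = cmp K (cmp K g f) (eps X)"
    using X Y Z by (simp add: cmp_assoc[OF eps_hom f g])
  finally show "G1 X Z (cmp K g f) = cmp K (G1 Y Z g) (G1 X Y f)"
    using X Y Z f g by (intro G1_unique) blast+
qed blast+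

lemma eta_iso:
  assumes X: "X \<in> Ob K"
  shows "is_iso K X (G0 (F0 X)) (eta X)"
proof (rule is_isoI)
  have eta: "eta X \<in> Hom K X (G0 (F0 X))" and eta': "eta' X \<in> Hom K (G0 (F0 X)) X"
    using X by blast+
  show "cmp K (eta' X) (eta X) = ident K X"
  proof (rule faithful[of X X])
    show "F1 X X (cmp K (eta' X) (eta X)) = F1 X X (ident K X)"
      using X by (simp add: F1_cmp[OF eta eta'])
  qed (use X eta eta' in \<open>simp_all add: cmp_hom ident_hom\<close>)
  show "cmp K (eta X) (eta' X) = ident K (G0 (F0 X))"
  proof (rule faithful[of "G0 (F0 X)" "G0 (F0 X)"])
    show "F1 (G0 (F0 X)) (G0 (F0 X)) (cmp K (eta X) (eta' X))
        = F1 (G0 (F0 X)) (G0 (F0 X)) (ident K (G0 (F0 X)))"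
      using X by (simp add: F1_cmp[OF eta' eta])
  qed (use X eta eta' in \<open>simp_all add: cmp_hom ident_hom\<close>)
qed (use X in blast)+

lemma eta_natural:
  assumes X: "X \<in> Ob K" and Y: "Y \<in> Ob K" and f: "f \<in> Hom K X Y"
  shows "cmp K (eta Y) f = cmp K (G1 (F0 X) (F0 Y) (F1 X Y f)) (eta X)"
proof (rule faithful[of X "G0 (F0 Y)"])
  have Ff: "F1 X Y f \<in> Hom K (F0 X) (F0 Y)"
    using X Y f by blast
  have Ff_eps: "cmp K (F1 X Y f) (eps (F0 X)) \<in> Hom K (F0 (G0 (F0 X))) (F0 Y)"
    using X Y f by blast
  have "F1 X (G0 (F0 Y)) (cmp K (G1 (F0 X) (F0 Y) (F1 X Y f)) (eta X))
      = cmp K (cmp K (eps' (F0 Y)) (cmp K (F1 X Y f) (eps (F0 X)))) (eps' (F0 X))"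
    using X Y Ff by (simp add: F1_cmp[OF eta_hom G1_hom] F1_G1)
  also have "\<dots> = cmp K (eps' (F0 Y)) (cmp K (cmp K (F1 X Y f) (eps (F0 X))) (eps' (F0 X)))"
    using X Y by (simp add: cmp_assoc[OF eps'_hom Ff_eps eps'_hom])
  also have "\<dots> = cmp K (eps' (F0 Y)) (F1 X Y f)"
    using X Y Ff by (simp add: cmp_inverse_cancel_right[OF eps'_hom eps_hom])
  also have "\<dots> = F1 X (G0 (F0 Y)) (cmp K (eta Y) f)"
    using X Y f by (simp add: F1_cmp[OF f eta_hom])
  finally show "F1 X (G0 (F0 Y)) (cmp K (eta Y) f)
      = F1 X (G0 (F0 Y)) (cmp K (G1 (F0 X) (F0 Y) (F1 X Y f)) (eta X))" ..
qed (use X Y f in blast)+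

lemma eps_iso: "Y \<in> Ob K \<Longrightarrow> is_iso K (F0 (G0 Y)) Y (eps Y)"
  by (rule is_isoI[where g = "eps' Y"]) (simp_all add: eps_hom eps'_hom)

lemma is_autoequivalence: "is_autoequivalence K F0 F1"
  unfolding is_autoequivalence_def
  by (intro conjI exI[where x = G0] exI[where x = G1] exI[where x = eta] exI[where x = eps] ballI
      endofunctor G_endofunctor eta_iso eta_natural eps_iso eps_natural)

end

context fully_faithful_endofunctor
begin

lemma is_autoequivalenceI:
  assumes ess_surj: "\<And>Y. Y \<in> Ob K \<Longrightarrow> \<exists>X\<in>Ob K. \<exists>e. is_iso K (F0 X) Y e"
  shows "is_autoequivalence K F0 F1"
proof -
  obtain G0 eps eps' where "\<And>Y. Y \<in> Ob K \<Longrightarrow> G0 Y \<in> Ob K \<and> eps Y \<in> Hom K (F0 (G0 Y)) Y \<and>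
      eps' Y \<in> Hom K Y (F0 (G0 Y)) \<and> cmp K (eps' Y) (eps Y) = ident K (F0 (G0 Y)) \<and>
      cmp K (eps Y) (eps' Y) = ident K Y"
    using ess_surj unfolding is_iso_def by metis
  then interpret quasi_inverse_data K F0 F1 G0 eps eps'
    by unfold_locales blast+
  show ?thesis
    by (rule is_autoequivalence)
qed

end

section \<open>Preadditive categories\<close>

locale abelian_group_on =
  fixes S :: "'a set" and add :: "'a \<Rightarrow> 'a \<Rightarrow> 'a" and zero :: 'a and neg :: "'a \<Rightarrow> 'a"
  assumes neg_closed: "a \<in> S \<Longrightarrow> neg a \<in> S"
    and add_assoc: "\<lbrakk>a \<in> S; b \<in> S; c \<in> S\<rbrakk> \<Longrightarrow> add (add a b) c = add a (add b c)"
    and add_commute: "\<lbrakk>a \<in> S; b \<in> S\<rbrakk> \<Longrightarrow> add a b = add b a"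
    and add_zero: "a \<in> S \<Longrightarrow> add a zero = a"
    and add_neg: "a \<in> S \<Longrightarrow> add a (neg a) = zero"
begin

lemma idempotent_eq_zero:
  assumes "w \<in> S" "add w w = w"
  shows "w = zero"
proof -
  have "zero = add (add w w) (neg w)"
    using assms by (simp add: add_neg)
  also have "\<dots> = w"
    using assms(1) by (simp add: add_assoc neg_closed add_neg add_zero)
  finally show ?thesis ..
qed

lemma eq_if_add_neg_eq_zero:
  assumes "a \<in> S" "b \<in> S" "add a (neg b) = zero"
  shows "a = b"
proof -
  have "b = add (add b a) (neg b)"
    using assms by (simp add: add_assoc neg_closed add_zero)
  also have "\<dots> = a"
    using assms by (simp add: add_commute add_assoc neg_closed add_neg add_zero)
  finally show ?thesis ..
qed

end

lemma zero_obj_Ob: "is_zero_obj K Z \<Longrightarrow> Z \<in> Ob K"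
  unfolding is_zero_obj_def by blast

lemma zero_obj_hom_from_unique: "\<lbrakk>is_zero_obj K Z; X \<in> Ob K; u \<in> Hom K Z X; v \<in> Hom K Z X\<rbrakk> \<Longrightarrow> u = v"
  unfolding is_zero_obj_def by blast

lemma zero_obj_hom_to_unique: "\<lbrakk>is_zero_obj K Z; X \<in> Ob K; u \<in> Hom K X Z; v \<in> Hom K X Z\<rbrakk> \<Longrightarrow> u = v"
  unfolding is_zero_obj_def by blast

locale preadditive_category = category +
  assumes is_preadditive: "is_preadditive K"
begin

lemma mzero_hom [intro]: "\<lbrakk>X \<in> Ob K; Y \<in> Ob K\<rbrakk> \<Longrightarrow> mzero K X Y \<in> Hom K X Y"
  using is_preadditive unfolding is_preadditive_def by meson

lemma madd_hom [intro]:
  "\<lbrakk>f \<in> Hom K X Y; g \<in> Hom K X Y; X \<in> Ob K; Y \<in> Ob K\<rbrakk> \<Longrightarrow> madd K f g \<in> Hom K X Y"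
  using is_preadditive unfolding is_preadditive_def by meson

lemma mneg_hom [intro]: "\<lbrakk>f \<in> Hom K X Y; X \<in> Ob K; Y \<in> Ob K\<rbrakk> \<Longrightarrow> mneg K f \<in> Hom K X Y"
  using is_preadditive unfolding is_preadditive_def by meson

lemma Hom_abelian_group:
  "\<lbrakk>X \<in> Ob K; Y \<in> Ob K\<rbrakk> \<Longrightarrow> abelian_group_on (Hom K X Y) (madd K) (mzero K X Y) (mneg K)"
  using is_preadditive unfolding is_preadditive_def abelian_group_on_def by meson

lemma cmp_madd_right:
  "\<lbrakk>f \<in> Hom K X Y; f' \<in> Hom K X Y; g \<in> Hom K Y Z; X \<in> Ob K; Y \<in> Ob K; Z \<in> Ob K\<rbrakk>
   \<Longrightarrow> cmp K g (madd K f f') = madd K (cmp K g f) (cmp K g f')"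
  using is_preadditive unfolding is_preadditive_def by meson

lemma cmp_mzero_right:
  assumes g: "g \<in> Hom K Y Z" and XYZ: "X \<in> Ob K" "Y \<in> Ob K" "Z \<in> Ob K"
  shows "cmp K g (mzero K X Y) = mzero K X Z"
proof -
  interpret Hom: abelian_group_on "Hom K X Z" "madd K" "mzero K X Z" "mneg K"
    using XYZ by (simp add: Hom_abelian_group)
  have zero: "mzero K X Y \<in> Hom K X Y"
    using XYZ(1,2) by (rule mzero_hom)
  have "madd K (mzero K X Y) (mzero K X Y) = mzero K X Y"
    using abelian_group_on.add_zero[OF Hom_abelian_group[OF XYZ(1,2)] zero] .
  then have "madd K (cmp K g (mzero K X Y)) (cmp K g (mzero K X Y)) = cmp K g (mzero K X Y)"
    using cmp_madd_right[OF zero zero g XYZ] by simp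
  then show ?thesis
    using XYZ by (intro Hom.idempotent_eq_zero cmp_hom[OF zero g])
qed

lemma cmp_through_zero_obj:
  assumes "is_zero_obj K Z" "u \<in> Hom K X Z" "v \<in> Hom K Z Y" "X \<in> Ob K" "Y \<in> Ob K"
  shows "cmp K v u = mzero K X Y"
proof -
  have Z: "Z \<in> Ob K"
    using assms(1) by (rule zero_obj_Ob)
  have "u = mzero K X Z"
    using assms(1,4,2) mzero_hom[OF assms(4) Z] by (rule zero_obj_hom_to_unique)
  then show ?thesis
    using assms(3-5) Z by (simp add: cmp_mzero_right)
qed

end

section \<open>Extriangulated categories\<close>

definition realised_through_zero :: "('o,'m,'e) extri \<Rightarrow> 'e \<Rightarrow> bool" where
  "realised_through_zero K d \<longleftrightarrow> (\<exists>Z x y. is_zero_obj K Z \<and> real K d Z x y)"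

locale extriangulated_category =
  fixes K :: "('o,'m,'e) extri"
  assumes extriangulated: "extriangulated K"

sublocale extriangulated_category \<subseteq> preadditive_category
  using extriangulated unfolding extriangulated_def is_additive_def
  by unfold_locales blast+

context extriangulated_category
begin

lemma zero_obj_ex: "\<exists>Z. is_zero_obj K Z"
  using extriangulated unfolding extriangulated_def is_additive_def by blast

lemma biproduct_ex: "\<lbrakk>A \<in> Ob K; B \<in> Ob K\<rbrakk> \<Longrightarrow> \<exists>S i1 p1 i2 p2. is_biproduct K A B S i1 p1 i2 p2"
  using extriangulated unfolding extriangulated_def is_additive_def by blast

lemma biadditive: "is_biadditive_E K"
  using extriangulated unfolding extriangulated_def by blast

lemma Ext_abelian_group:
  "\<lbrakk>C \<in> Ob K; A \<in> Ob K\<rbrakk> \<Longrightarrow> abelian_group_on (Ext K C A) (eadd K) (ezero K C A) (eneg K)"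
  using biadditive unfolding is_biadditive_E_def abelian_group_on_def by meson

lemma ezero_Ext [intro]: "\<lbrakk>C \<in> Ob K; A \<in> Ob K\<rbrakk> \<Longrightarrow> ezero K C A \<in> Ext K C A"
  using biadditive unfolding is_biadditive_E_def by meson

lemma push_Ext [intro]:
  "\<lbrakk>a \<in> Hom K A A'; d \<in> Ext K C A; C \<in> Ob K; A \<in> Ob K; A' \<in> Ob K\<rbrakk> \<Longrightarrow> push K a d \<in> Ext K C A'"
  using biadditive unfolding is_biadditive_E_def by meson

lemma pull_Ext [intro]:
  "\<lbrakk>c \<in> Hom K C' C; d \<in> Ext K C A; C \<in> Ob K; C' \<in> Ob K; A \<in> Ob K\<rbrakk> \<Longrightarrow> pull K c d \<in> Ext K C' A"
  using biadditive unfolding is_biadditive_E_def by meson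

lemma push_ident [simp]: "\<lbrakk>d \<in> Ext K C A; C \<in> Ob K; A \<in> Ob K\<rbrakk> \<Longrightarrow> push K (ident K A) d = d"
  using biadditive unfolding is_biadditive_E_def by meson

lemma pull_ident [simp]: "\<lbrakk>d \<in> Ext K C A; C \<in> Ob K; A \<in> Ob K\<rbrakk> \<Longrightarrow> pull K (ident K C) d = d"
  using biadditive unfolding is_biadditive_E_def by meson

lemma push_cmp:
  "\<lbrakk>a \<in> Hom K A A'; a' \<in> Hom K A' A''; d \<in> Ext K C A; C \<in> Ob K; A \<in> Ob K; A' \<in> Ob K; A'' \<in> Ob K\<rbrakk>
   \<Longrightarrow> push K (cmp K a' a) d = push K a' (push K a d)"
  using biadditive unfolding is_biadditive_E_def by meson

lemma pull_cmp:
  "\<lbrakk>c \<in> Hom K C' C; c' \<in> Hom K C'' C'; d \<in> Ext K C A; C \<in> Ob K; C' \<in> Ob K; C'' \<in> Ob K; A \<in> Ob K\<rbrakk>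
   \<Longrightarrow> pull K (cmp K c c') d = pull K c' (pull K c d)"
  using biadditive unfolding is_biadditive_E_def by meson

lemma push_pull:
  "\<lbrakk>a \<in> Hom K A A'; c \<in> Hom K C' C; d \<in> Ext K C A; C \<in> Ob K; C' \<in> Ob K; A \<in> Ob K; A' \<in> Ob K\<rbrakk>
   \<Longrightarrow> push K a (pull K c d) = pull K c (push K a d)"
  using biadditive unfolding is_biadditive_E_def by meson

lemma push_madd:
  "\<lbrakk>a \<in> Hom K A A'; b \<in> Hom K A A'; d \<in> Ext K C A; C \<in> Ob K; A \<in> Ob K; A' \<in> Ob K\<rbrakk>
   \<Longrightarrow> push K (madd K a b) d = eadd K (push K a d) (push K b d)"
  using biadditive unfolding is_biadditive_E_def by meson

lemma pull_madd:
  "\<lbrakk>c \<in> Hom K C' C; c' \<in> Hom K C' C; d \<in> Ext K C A; C \<in> Ob K; C' \<in> Ob K; A \<in> Ob K\<rbrakk>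
   \<Longrightarrow> pull K (madd K c c') d = eadd K (pull K c d) (pull K c' d)"
  using biadditive unfolding is_biadditive_E_def by meson

lemma additive_realisation: "is_additive_realisation K"
  using extriangulated unfolding extriangulated_def by blast

lemma class_assignment: "is_class_assignment K"
  using additive_realisation unfolding is_additive_realisation_def is_realisation_def by blast

lemma real_hom:
  assumes "real K d B x y" "d \<in> Ext K C A" "C \<in> Ob K" "A \<in> Ob K"
  shows "B \<in> Ob K" "x \<in> Hom K A B" "y \<in> Hom K B C"
  using class_assignment assms unfolding is_class_assignment_def by meson+

lemma real_ex: "\<lbrakk>d \<in> Ext K C A; C \<in> Ob K; A \<in> Ob K\<rbrakk> \<Longrightarrow> \<exists>B x y. real K d B x y"
  using class_assignment unfolding is_class_assignment_def by meson

lemma real_morphism: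
  assumes "real K d B x y" "real K d' B' x' y'" "push K a d = pull K c d'"
    and "d \<in> Ext K C A" "d' \<in> Ext K C' A'" "a \<in> Hom K A A'" "c \<in> Hom K C C'"
    and "A \<in> Ob K" "C \<in> Ob K" "A' \<in> Ob K" "C' \<in> Ob K"
  shows "\<exists>b\<in>Hom K B B'. cmp K b x = cmp K x' a \<and> cmp K y' b = cmp K c y"
  using additive_realisation assms unfolding is_additive_realisation_def is_realisation_def by meson

lemma biproduct_real_ezero:
  "\<lbrakk>is_biproduct K A C S i1 p1 i2 p2; A \<in> Ob K; C \<in> Ob K\<rbrakk> \<Longrightarrow> real K (ezero K C A) S i1 p2"
  using additive_realisation unfolding is_additive_realisation_def by meson

lemma ET3_rule:
  assumes "real K d B x y" "real K d' B' x' y'" "cmp K b x = cmp K x' a"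
    and "d \<in> Ext K C A" "d' \<in> Ext K C' A'" "a \<in> Hom K A A'" "b \<in> Hom K B B'"
    and "A \<in> Ob K" "C \<in> Ob K" "A' \<in> Ob K" "C' \<in> Ob K"
  shows "\<exists>c\<in>Hom K C C'. cmp K c y = cmp K y' b \<and> push K a d = pull K c d'"
  using extriangulated assms unfolding extriangulated_def ET3_def by meson

lemma ET3op_rule:
  assumes "real K d B x y" "real K d' B' x' y'" "cmp K c y = cmp K y' b"
    and "d \<in> Ext K C A" "d' \<in> Ext K C' A'" "b \<in> Hom K B B'" "c \<in> Hom K C C'"
    and "A \<in> Ob K" "C \<in> Ob K" "A' \<in> Ob K" "C' \<in> Ob K"
  shows "\<exists>a\<in>Hom K A A'. cmp K b x = cmp K x' a \<and> push K a d = pull K c d'"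
  using extriangulated assms unfolding extriangulated_def ET3op_def by meson

lemma push_mzero:
  assumes d: "d \<in> Ext K C A" and obs: "C \<in> Ob K" "A \<in> Ob K" "A' \<in> Ob K"
  shows "push K (mzero K A A') d = ezero K C A'"
proof -
  have zero: "mzero K A A' \<in> Hom K A A'"
    using obs by blast
  have "madd K (mzero K A A') (mzero K A A') = mzero K A A'"
    using abelian_group_on.add_zero[OF Hom_abelian_group zero] obs by blast
  then have "eadd K (push K (mzero K A A') d) (push K (mzero K A A') d) = push K (mzero K A A') d"
    using push_madd[OF zero zero d obs] by simp
  then show ?thesis
    using abelian_group_on.idempotent_eq_zero[OF Ext_abelian_group] push_Ext[OF zero d] obs by blast
qed

lemma pull_mzero:
  assumes d: "d \<in> Ext K C A" and obs: "C \<in> Ob K" "C' \<in> Ob K" "A \<in> Ob K"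
  shows "pull K (mzero K C' C) d = ezero K C' A"
proof -
  have zero: "mzero K C' C \<in> Hom K C' C"
    using obs by blast
  have "madd K (mzero K C' C) (mzero K C' C) = mzero K C' C"
    using abelian_group_on.add_zero[OF Hom_abelian_group zero] obs by blast
  then have "eadd K (pull K (mzero K C' C) d) (pull K (mzero K C' C) d) = pull K (mzero K C' C) d"
    using pull_madd[OF zero zero d obs] by simp
  then show ?thesis
    using abelian_group_on.idempotent_eq_zero[OF Ext_abelian_group] pull_Ext[OF zero d] obs by blast
qed

lemma pull_eq_ezero_imp_mzero:
  assumes dz: "realised_through_zero K d" and d: "d \<in> Ext K C A" and c: "c \<in> Hom K C' C"
    and pull: "pull K c d = ezero K C' A"
    and obs: "A \<in> Ob K" "C \<in> Ob K" "C' \<in> Ob K"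
  shows "c = mzero K C' C"
proof -
  obtain Z x y where Z: "is_zero_obj K Z" and r: "real K d Z x y"
    using dz unfolding realised_through_zero_def by blast
  have Z_Ob: "Z \<in> Ob K" and y: "y \<in> Hom K Z C"
    using real_hom[OF r d obs(2,1)] by blast+
  obtain S i1 p1 i2 p2 where S: "is_biproduct K A C' S i1 p1 i2 p2"
    using biproduct_ex obs by blast
  have S_Ob: "S \<in> Ob K" and i1: "i1 \<in> Hom K A S" and i2: "i2 \<in> Hom K C' S" and p2: "p2 \<in> Hom K S C'"
    and p2_i2: "cmp K p2 i2 = ident K C'"
    using S unfolding is_biproduct_def by blast+
  txt \<open>Compare the split extension A -> S -> C' with d along the identity of A and c.\<close>
  have "push K (ident K A) (ezero K C' A) = pull K c d"
    using pull push_ident[OF ezero_Ext[OF obs(3,1)]] obs by simp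
  then obtain b where b: "b \<in> Hom K S Z" and yb: "cmp K y b = cmp K c p2"
    using real_morphism[OF biproduct_real_ezero[OF S obs(1,3)] r _ ezero_Ext d ident_hom c] obs
    by blast
  have "c = cmp K (cmp K c p2) i2"
    using c i2 p2 obs S_Ob by (simp flip: cmp_assoc add: p2_i2)
  also have "\<dots> = cmp K y (cmp K b i2)"
    using i2 b y obs S_Ob Z_Ob by (simp flip: yb add: cmp_assoc)
  also have "\<dots> = mzero K C' C"
    using Z cmp_hom[OF i2 b] y obs S_Ob Z_Ob by (intro cmp_through_zero_obj)
  finally show ?thesis .
qed

lemma push_eq_ezero_imp_mzero:
  assumes dz: "realised_through_zero K d" and d: "d \<in> Ext K C A" and a: "a \<in> Hom K A A'"
    and push: "push K a d = ezero K C A'"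
    and obs: "A \<in> Ob K" "C \<in> Ob K" "A' \<in> Ob K"
  shows "a = mzero K A A'"
proof -
  obtain Z x y where Z: "is_zero_obj K Z" and r: "real K d Z x y"
    using dz unfolding realised_through_zero_def by blast
  have Z_Ob: "Z \<in> Ob K" and x: "x \<in> Hom K A Z"
    using real_hom[OF r d obs(2,1)] by blast+
  obtain S i1 p1 i2 p2 where S: "is_biproduct K A' C S i1 p1 i2 p2"
    using biproduct_ex obs by blast
  have S_Ob: "S \<in> Ob K" and i1: "i1 \<in> Hom K A' S" and p1: "p1 \<in> Hom K S A'" and p2: "p2 \<in> Hom K S C"
    and p1_i1: "cmp K p1 i1 = ident K A'"
    using S unfolding is_biproduct_def by blast+
  have "push K a d = pull K (ident K C) (ezero K C A')"
    using push pull_ident[OF ezero_Ext[OF obs(2,3)]] obs by simp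
  then obtain b where b: "b \<in> Hom K Z S" and bx: "cmp K b x = cmp K i1 a"
    using real_morphism[OF r biproduct_real_ezero[OF S obs(3,2)] _ d ezero_Ext a ident_hom] obs
    by blast
  have "a = cmp K p1 (cmp K i1 a)"
    using a i1 p1 obs S_Ob by (simp add: cmp_assoc p1_i1)
  also have "\<dots> = cmp K (cmp K p1 b) x"
    using x b p1 obs S_Ob Z_Ob by (simp flip: bx add: cmp_assoc)
  also have "\<dots> = mzero K A A'"
    using Z x cmp_hom[OF b p1] obs S_Ob Z_Ob by (intro cmp_through_zero_obj)
  finally show ?thesis .
qed

lemma pull_injective:
  assumes dz: "realised_through_zero K d" and d: "d \<in> Ext K C A"
    and g: "g \<in> Hom K C' C" and g': "g' \<in> Hom K C' C" and eq: "pull K g d = pull K g' d"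
    and obs: "A \<in> Ob K" "C \<in> Ob K" "C' \<in> Ob K"
  shows "g = g'"
proof -
  interpret Hom: abelian_group_on "Hom K C' C" "madd K" "mzero K C' C" "mneg K"
    using obs by (simp add: Hom_abelian_group)
  have n: "mneg K g' \<in> Hom K C' C"
    using g' obs by blast
  have "pull K (madd K g (mneg K g')) d = pull K (madd K g' (mneg K g')) d"
    using eq pull_madd[OF g n d] pull_madd[OF g' n d] obs by simp
  also have "\<dots> = ezero K C' A"
    using g' d obs by (simp add: Hom.add_neg pull_mzero)
  finally have "madd K g (mneg K g') = mzero K C' C"
    using pull_eq_ezero_imp_mzero[OF dz d] g n obs by blast
  then show ?thesis
    by (rule Hom.eq_if_add_neg_eq_zero[OF g g'])
qed

lemma push_injective:
  assumes dz: "realised_through_zero K d" and d: "d \<in> Ext K C A"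
    and g: "g \<in> Hom K A A'" and g': "g' \<in> Hom K A A'" and eq: "push K g d = push K g' d"
    and obs: "A \<in> Ob K" "C \<in> Ob K" "A' \<in> Ob K"
  shows "g = g'"
proof -
  interpret Hom: abelian_group_on "Hom K A A'" "madd K" "mzero K A A'" "mneg K"
    using obs by (simp add: Hom_abelian_group)
  have n: "mneg K g' \<in> Hom K A A'"
    using g' obs by blast
  have "push K (madd K g (mneg K g')) d = push K (madd K g' (mneg K g')) d"
    using eq push_madd[OF g n d] push_madd[OF g' n d] obs by simp
  also have "\<dots> = ezero K C A'"
    using g' d obs by (simp add: Hom.add_neg push_mzero)
  finally have "madd K g (mneg K g') = mzero K A A'"
    using push_eq_ezero_imp_mzero[OF dz d] g n obs by blast
  then show ?thesis
    by (rule Hom.eq_if_add_neg_eq_zero[OF g g'])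
qed

lemma push_eq_pull_ex:
  assumes d: "d \<in> Ext K C A" and dz': "realised_through_zero K d'" and d': "d' \<in> Ext K C' A'"
    and a: "a \<in> Hom K A A'" and obs: "A \<in> Ob K" "C \<in> Ob K" "A' \<in> Ob K" "C' \<in> Ob K"
  shows "\<exists>c\<in>Hom K C C'. push K a d = pull K c d'"
proof -
  obtain B x y where r: "real K d B x y"
    using real_ex[OF d obs(2,1)] by blast
  obtain Z' x' y' where Z': "is_zero_obj K Z'" and r': "real K d' Z' x' y'"
    using dz' unfolding realised_through_zero_def by blast
  have B: "B \<in> Ob K" and x: "x \<in> Hom K A B" and Z'_Ob: "Z' \<in> Ob K" and x': "x' \<in> Hom K A' Z'"
    using real_hom[OF r d obs(2,1)] real_hom[OF r' d' obs(4,3)] by blast+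
  obtain b where b: "b \<in> Hom K B Z'"
    using Z' B unfolding is_zero_obj_def by blast
  have "cmp K b x = cmp K x' a"
    using Z' obs B Z'_Ob cmp_hom[OF x b] cmp_hom[OF a x'] by (intro zero_obj_hom_to_unique)
  then show ?thesis
    using ET3_rule[OF r r' _ d d' a b obs(1,2,3,4)] by blast
qed

lemma pull_eq_push_ex:
  assumes dz: "realised_through_zero K d" and d: "d \<in> Ext K C A" and d': "d' \<in> Ext K C' A'"
    and c: "c \<in> Hom K C C'" and obs: "A \<in> Ob K" "C \<in> Ob K" "A' \<in> Ob K" "C' \<in> Ob K"
  shows "\<exists>a\<in>Hom K A A'. push K a d = pull K c d'"
proof -
  obtain Z x y where Z: "is_zero_obj K Z" and r: "real K d Z x y"
    using dz unfolding realised_through_zero_def by blast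
  obtain B' x' y' where r': "real K d' B' x' y'"
    using real_ex[OF d' obs(4,3)] by blast
  have Z_Ob: "Z \<in> Ob K" and y: "y \<in> Hom K Z C" and B': "B' \<in> Ob K" and y': "y' \<in> Hom K B' C'"
    using real_hom[OF r d obs(2,1)] real_hom[OF r' d' obs(4,3)] by blast+
  obtain b where b: "b \<in> Hom K Z B'"
    using Z B' unfolding is_zero_obj_def by blast
  have "cmp K c y = cmp K y' b"
    using Z obs B' Z_Ob cmp_hom[OF y c] cmp_hom[OF b y'] by (intro zero_obj_hom_from_unique)
  then show ?thesis
    using ET3op_rule[OF r r' _ d d' b c obs(1,2,3,4)] by blast
qed

lemma is_iso_if_pull_inverse:
  assumes dz: "realised_through_zero K d" and d: "d \<in> Ext K C A"
    and dz': "realised_through_zero K d'" and d': "d' \<in> Ext K C' A"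
    and c: "c \<in> Hom K C C'" and c': "c' \<in> Hom K C' C"
    and pull_c: "pull K c d' = d" and pull_c': "pull K c' d = d'"
    and obs: "A \<in> Ob K" "C \<in> Ob K" "C' \<in> Ob K"
  shows "is_iso K C' C c'"
proof (rule is_isoI[OF c' c])
  have "pull K (cmp K c c') d' = pull K (ident K C') d'"
    using pull_cmp[OF c c' d'] obs d' by (simp add: pull_c pull_c')
  then show "cmp K c c' = ident K C'"
    using obs c c' by (intro pull_injective[OF dz' d']) (blast intro: cmp_hom)+
  have "pull K (cmp K c' c) d = pull K (ident K C) d"
    using pull_cmp[OF c' c d] obs d by (simp add: pull_c pull_c')
  then show "cmp K c' c = ident K C"
    using obs c c' by (intro pull_injective[OF dz d]) (blast intro: cmp_hom)+
qed

end

section \<open>The suspension functor\<close>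

locale suspension_data = extriangulated_category K for K :: "('o,'m,'e) extri" +
  fixes Sig :: "'o \<Rightarrow> 'o" and dl :: "'o \<Rightarrow> 'e"
  assumes Sig_Ob [simp, intro]: "X \<in> Ob K \<Longrightarrow> Sig X \<in> Ob K"
    and dl_Ext [intro]: "X \<in> Ob K \<Longrightarrow> dl X \<in> Ext K (Sig X) X"
    and dl_realised_through_zero: "X \<in> Ob K \<Longrightarrow> realised_through_zero K (dl X)"
begin

lemma SigmaMor_unique:
  assumes f: "f \<in> Hom K X Y" and X: "X \<in> Ob K" and Y: "Y \<in> Ob K"
  shows "\<exists>!g. g \<in> Hom K (Sig X) (Sig Y) \<and> push K f (dl X) = pull K g (dl Y)"
proof -
  have "\<exists>g\<in>Hom K (Sig X) (Sig Y). push K f (dl X) = pull K g (dl Y)"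
    using X Y by (intro push_eq_pull_ex[OF dl_Ext dl_realised_through_zero dl_Ext f]) simp_all
  moreover have "g = g'"
    if "g \<in> Hom K (Sig X) (Sig Y)" "g' \<in> Hom K (Sig X) (Sig Y)" "pull K g (dl Y) = pull K g' (dl Y)" for g g'
    using pull_injective[OF dl_realised_through_zero[OF Y] dl_Ext[OF Y] that] X Y by simp
  ultimately show ?thesis
    by metis
qed

lemma SigmaMor:
  assumes "f \<in> Hom K X Y" "X \<in> Ob K" "Y \<in> Ob K"
  shows "SigmaMor K Sig dl X Y f \<in> Hom K (Sig X) (Sig Y)"
    and "push K f (dl X) = pull K (SigmaMor K Sig dl X Y f) (dl Y)"
  using theI'[OF SigmaMor_unique[OF assms]] unfolding SigmaMor_def by blast+

lemma SigmaMor_eqI: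
  assumes "f \<in> Hom K X Y" "X \<in> Ob K" "Y \<in> Ob K"
    and "g \<in> Hom K (Sig X) (Sig Y)" "push K f (dl X) = pull K g (dl Y)"
  shows "SigmaMor K Sig dl X Y f = g"
  using SigmaMor[OF assms(1-3)] SigmaMor_unique[OF assms(1-3)] assms(4,5) by blast

lemma SigmaMor_additive_endofunctor: "is_additive_endofunctor K Sig (SigmaMor K Sig dl)"
  unfolding is_additive_endofunctor_def is_endofunctor_def
proof (intro conjI ballI)
  fix X assume X: "X \<in> Ob K"
  show "SigmaMor K Sig dl X X (ident K X) = ident K (Sig X)"
    using X dl_Ext[OF X] by (intro SigmaMor_eqI) auto
next
  fix X Y Z f g assume X: "X \<in> Ob K" and Y: "Y \<in> Ob K" and Z: "Z \<in> Ob K"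
    and f: "f \<in> Hom K X Y" and g: "g \<in> Hom K Y Z"
  note Sf = SigmaMor[OF f X Y] and Sg = SigmaMor[OF g Y Z]
  have "push K (cmp K g f) (dl X) = push K g (pull K (SigmaMor K Sig dl X Y f) (dl Y))"
    using push_cmp[OF f g dl_Ext] X Y Z Sf by simp
  also have "\<dots> = pull K (SigmaMor K Sig dl X Y f) (pull K (SigmaMor K Sig dl Y Z g) (dl Z))"
    using push_pull[OF g Sf(1) dl_Ext] X Y Z Sg by simp
  also have "\<dots> = pull K (cmp K (SigmaMor K Sig dl Y Z g) (SigmaMor K Sig dl X Y f)) (dl Z)"
    using pull_cmp[OF Sg(1) Sf(1) dl_Ext] X Y Z by simp
  finally show "SigmaMor K Sig dl X Z (cmp K g f) = cmp K (SigmaMor K Sig dl Y Z g) (SigmaMor K Sig dl X Y f)"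
    using X Y Z Sf(1) Sg(1) by (intro SigmaMor_eqI cmp_hom[OF f g] cmp_hom[OF Sf(1) Sg(1)]) simp_all
next
  fix X Y f g assume X: "X \<in> Ob K" and Y: "Y \<in> Ob K" and f: "f \<in> Hom K X Y" and g: "g \<in> Hom K X Y"
  note Sf = SigmaMor[OF f X Y] and Sg = SigmaMor[OF g X Y]
  have "push K (madd K f g) (dl X) = pull K (madd K (SigmaMor K Sig dl X Y f) (SigmaMor K Sig dl X Y g)) (dl Y)"
    using push_madd[OF f g dl_Ext] pull_madd[OF Sf(1) Sg(1) dl_Ext] X Y Sf(2) Sg(2) by simp
  then show "SigmaMor K Sig dl X Y (madd K f g) = madd K (SigmaMor K Sig dl X Y f) (SigmaMor K Sig dl X Y g)"
    using X Y by (intro SigmaMor_eqI madd_hom[OF f g] madd_hom[OF Sf(1) Sg(1)]) simp_all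
qed (auto intro: SigmaMor)

lemma SigmaMor_full:
  assumes X: "X \<in> Ob K" and Y: "Y \<in> Ob K" and g: "g \<in> Hom K (Sig X) (Sig Y)"
  shows "\<exists>f\<in>Hom K X Y. SigmaMor K Sig dl X Y f = g"
proof -
  obtain f where f: "f \<in> Hom K X Y" and "push K f (dl X) = pull K g (dl Y)"
    using pull_eq_push_ex[OF dl_realised_through_zero dl_Ext dl_Ext g] X Y by auto
  then show ?thesis
    using X Y g by (blast intro: SigmaMor_eqI)
qed

lemma SigmaMor_faithful:
  assumes X: "X \<in> Ob K" and Y: "Y \<in> Ob K" and f: "f \<in> Hom K X Y" and f': "f' \<in> Hom K X Y"
    and eq: "SigmaMor K Sig dl X Y f = SigmaMor K Sig dl X Y f'"
  shows "f = f'"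
proof -
  have "push K f (dl X) = push K f' (dl X)"
    using SigmaMor(2)[OF f X Y] SigmaMor(2)[OF f' X Y] eq by simp
  then show ?thesis
    using X Y by (intro push_injective[OF dl_realised_through_zero dl_Ext f f']) simp_all
qed

lemma Sig_essentially_surjective:
  assumes Y: "Y \<in> Ob K" and Z: "is_zero_obj K Z" and deflation: "is_deflation K Z Y y"
  shows "\<exists>X\<in>Ob K. \<exists>e. is_iso K (Sig X) Y e"
proof -
  obtain A d x where A: "A \<in> Ob K" and d: "d \<in> Ext K Y A" and r: "real K d Z x y"
    using deflation unfolding is_deflation_def by blast
  have dz: "realised_through_zero K d"
    using Z r unfolding realised_through_zero_def by blast
  obtain c where c: "c \<in> Hom K Y (Sig A)" and "push K (ident K A) d = pull K c (dl A)"
    using push_eq_pull_ex[OF d dl_realised_through_zero dl_Ext ident_hom] A Y by auto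
  then have pull_c: "pull K c (dl A) = d"
    using d A Y by simp
  obtain c' where c': "c' \<in> Hom K (Sig A) Y" and "push K (ident K A) (dl A) = pull K c' d"
    using push_eq_pull_ex[OF dl_Ext dz d ident_hom] A Y by auto
  then have pull_c': "pull K c' d = dl A"
    using dl_Ext[OF A] A by simp
  have "is_iso K (Sig A) Y c'"
    using is_iso_if_pull_inverse[OF dz d dl_realised_through_zero dl_Ext c c' pull_c pull_c'] A Y by simp
  then show ?thesis
    using A by blast
qed

end

theorem proposition3p7:
  fixes K :: "('o,'m,'e) extri" and Sig :: "'o \<Rightarrow> 'o" and dl :: "'o \<Rightarrow> 'e"
  assumes "extriangulated K"
    and "\<forall>X\<in>Ob K. \<forall>Z. is_zero_obj K Z \<longrightarrow>
           (\<forall>x\<in>Hom K X Z. is_inflation K X Z x) \<and> (\<forall>y\<in>Hom K Z X. is_deflation K Z X y)"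
    and "\<forall>X\<in>Ob K. Sig X \<in> Ob K \<and> dl X \<in> Ext K (Sig X) X \<and>
           (\<exists>Z x y. is_zero_obj K Z \<and> real K (dl X) Z x y)"
  shows "is_additive_endofunctor K Sig (SigmaMor K Sig dl) \<and>
         is_autoequivalence K Sig (SigmaMor K Sig dl)"
proof -
  interpret suspension_data K Sig dl
    using assms(1,3) by unfold_locales (simp_all add: realised_through_zero_def)
  have additive: "is_additive_endofunctor K Sig (SigmaMor K Sig dl)"
    by (rule SigmaMor_additive_endofunctor)
  interpret fully_faithful_endofunctor K Sig "SigmaMor K Sig dl"
  proof unfold_locales
    show "is_endofunctor K Sig (SigmaMor K Sig dl)"
      using additive unfolding is_additive_endofunctor_def by (rule conjunct1)
  qed (fact SigmaMor_full SigmaMor_faithful)+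
  have "\<exists>X\<in>Ob K. \<exists>e. is_iso K (Sig X) Y e" if Y: "Y \<in> Ob K" for Y
  proof -
    obtain Z where Z: "is_zero_obj K Z"
      using zero_obj_ex ..
    then have "is_deflation K Z Y (mzero K Z Y)"
      using assms(2) Y mzero_hom[OF zero_obj_Ob[OF Z] Y] by meson
    with Y Z show ?thesis
      by (rule Sig_essentially_surjective)
  qed
  then show ?thesis
    using additive by (simp add: is_autoequivalenceI)
qed

end
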